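(* Let $f$ be an invertible $\mathbb F_q$-linearised polynomial over $\mathbb F_{q^h}$ and let $a\in\mathbb F_{q^h}$. Then the map $X\mapsto f(af^{-1}(X))$ is $\mathbb F_{q^h}$-linear (i.e. equals $X\mapsto bX$ for some $b\in\mathbb F_{q^h}$) if and only if $f$ is $\mathbb F_q(a)$-semi-linear.
   Context: An $\mathbb F_q$-linearised polynomial over $\mathbb F_{q^h}$ is $\sum_{l=0}^{h-1}a_lX^{q^l}$ with $a_l\in\mathbb F_{q^h}$, viewed as a map $\mathbb F_{q^h}\to\mathbb F_{q^h}$; invertible means bijective, and $f^{-1}$ denotes the inverse map (again a linearised polynomial). For a subfield $K$ of $\mathbb F_{q^h}$, $f$ is $K$-semi-linear if there is a field automorphism $\sigma$ of $\mathbb F_{q^h}$ with $f(\alpha x)=\alpha^\sigma f(x)$ for all $\alpha\in K$ and $x\in\mathbb F_{q^h}$. *)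

theory Defs
  imports "HOL-Computational_Algebra.Primes"
begin

text \<open>Ambient field F_{q^h} is a finite field type 'a with CARD('a) = q^h.
  The subfield F_q is {x. x^q = x}.\<close>

definition Fq :: "nat \<Rightarrow> 'a::field set" where
  "Fq q = {x. x ^ q = x}"

definition is_subfield :: "'a::field set \<Rightarrow> bool" where
  "is_subfield K \<longleftrightarrow> 0 \<in> K \<and> 1 \<in> K \<and>
     (\<forall>x\<in>K. \<forall>y\<in>K. x + y \<in> K \<and> x * y \<in> K) \<and>
     (\<forall>x\<in>K. - x \<in> K) \<and> (\<forall>x\<in>K. x \<noteq> 0 \<longrightarrow> inverse x \<in> K)"

definition Fq_adj :: "nat \<Rightarrow> 'a::field \<Rightarrow> 'a set" where
  "Fq_adj q a = \<Inter> {K. is_subfield K \<and> Fq q \<subseteq> K \<and> a \<in> K}"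

definition linearised :: "nat \<Rightarrow> nat \<Rightarrow> ('a::field \<Rightarrow> 'a) \<Rightarrow> bool" where
  "linearised q h f \<longleftrightarrow> (\<exists>c :: nat \<Rightarrow> 'a. \<forall>x. f x = (\<Sum>l<h. c l * x ^ (q ^ l)))"

definition field_aut :: "('a::field \<Rightarrow> 'a) \<Rightarrow> bool" where
  "field_aut \<sigma> \<longleftrightarrow> bij \<sigma> \<and> (\<forall>x y. \<sigma> (x + y) = \<sigma> x + \<sigma> y) \<and>
     (\<forall>x y. \<sigma> (x * y) = \<sigma> x * \<sigma> y) \<and> \<sigma> 1 = 1"

definition semilinear :: "'a::field set \<Rightarrow> ('a \<Rightarrow> 'a) \<Rightarrow> bool" where
  "semilinear K f \<longleftrightarrow> (\<exists>\<sigma>. field_aut \<sigma> \<and> (\<forall>\<alpha>\<in>K. \<forall>x. f (\<alpha> * x) = \<sigma> \<alpha> * f x))"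

end

theory Submission
  imports Defs "HOL-Computational_Algebra.Polynomial"
begin

(* If f (a * f^-1 X) = b * X, then f (a * Y) = b * f Y. Both sides are q-polynomials of
   degree less than q^h, so they have the same coefficients: a^(q^l) = b for every l in the
   support of f. Fix such an l0. The elements alpha whose Frobenius powers alpha^(q^l), l in the
   support, all equal alpha^(q^l0) form a subfield (an equalizer of field homomorphisms); it
   contains F_q and a, hence F_q(a), and on it f is semi-linear with respect to the
   automorphism x \<mapsto> x^(q^l0). Conversely, if f is semi-linear with automorphism sigma,
   then b = sigma a works. *)

definition field_hom :: "('a::field \<Rightarrow> 'a) \<Rightarrow> bool" where
  "field_hom \<phi> \<longleftrightarrow> (\<forall>x y. \<phi> (x + y) = \<phi> x + \<phi> y) \<and> (\<forall>x y. \<phi> (x * y) = \<phi> x * \<phi> y) \<and> \<phi> 1 = 1"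

lemma field_hom_add: "field_hom \<phi> \<Longrightarrow> \<phi> (x + y) = \<phi> x + \<phi> y"
  and field_hom_mult: "field_hom \<phi> \<Longrightarrow> \<phi> (x * y) = \<phi> x * \<phi> y"
  and field_hom_1: "field_hom \<phi> \<Longrightarrow> \<phi> 1 = 1"
  by (simp_all add: field_hom_def)

lemma field_hom_0: "field_hom \<phi> \<Longrightarrow> \<phi> 0 = 0"
  using field_hom_add[of \<phi> 0 0] by (metis add_cancel_right_right)

lemma field_hom_uminus: "field_hom \<phi> \<Longrightarrow> \<phi> (- x) = - \<phi> x"
  using field_hom_add[of \<phi> x "- x"] field_hom_0[of \<phi>] by (metis minus_unique add.right_inverse)

lemma field_hom_inverse:
  assumes "field_hom \<phi>" "x \<noteq> 0"
  shows "\<phi> (inverse x) = inverse (\<phi> x)"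
proof -
  have "\<phi> x * \<phi> (inverse x) = 1"
    using assms field_hom_mult[of \<phi> x "inverse x"] by (simp add: field_hom_1)
  thus ?thesis by (metis inverse_unique)
qed

lemma field_hom_inj:
  assumes "field_hom \<phi>"
  shows "inj \<phi>"
proof (rule injI)
  fix x y assume "\<phi> x = \<phi> y"
  moreover have "\<phi> x = \<phi> (x - y) + \<phi> y"
    using field_hom_add[OF assms, of "x - y" y] by simp
  ultimately have "\<phi> (x - y) = 0" by simp
  show "x = y"
  proof (rule ccontr)
    assume "x \<noteq> y"
    hence "\<phi> (x - y) * \<phi> (inverse (x - y)) = 1"
      using field_hom_mult[OF assms, of "x - y" "inverse (x - y)"] field_hom_1[OF assms] by simp
    with \<open>\<phi> (x - y) = 0\<close> show False by simp
  qed
qed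

lemma field_aut_if_field_hom:
  fixes \<phi> :: "'a::{field,finite} \<Rightarrow> 'a"
  assumes "field_hom \<phi>"
  shows "field_aut \<phi>"
  using assms field_hom_inj[OF assms] finite_UNIV_inj_surj[of \<phi>]
  by (auto simp: field_aut_def field_hom_def bij_def)

lemma is_subfield_equalizer:
  assumes "\<And>i. i \<in> I \<Longrightarrow> field_hom (\<phi> i)" and "field_hom \<psi>"
  shows "is_subfield {x. \<forall>i\<in>I. \<phi> i x = \<psi> x}"
  using assms unfolding is_subfield_def
  by (simp add: field_hom_0 field_hom_1 field_hom_add field_hom_mult field_hom_uminus
      field_hom_inverse)

lemma field_hom_power_CHAR:
  assumes "prime CHAR('a::field)" and "m = CHAR('a) ^ n"
  shows "field_hom (\<lambda>x::'a. x ^ m)"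
  unfolding field_hom_def using freshmans_dream'[OF assms] by (simp add: power_mult_distrib)

lemma CHAR_dvd_card: "CHAR('a::{field,finite}) dvd card (UNIV :: 'a set)"
proof -
  \<comment> \<open>translation by 1 permutes the field, so summing gives \<open>card UNIV * 1 = 0\<close>\<close>
  have "(\<Sum>y\<in>UNIV. y + 1) = (\<Sum>y\<in>(UNIV::'a set). y)"
    by (rule sum.reindex_bij_witness[of _ "\<lambda>y. y - 1" "\<lambda>y. y + 1"]) auto
  hence "of_nat (card (UNIV :: 'a set)) = (0::'a)"
    by (simp add: sum.distrib)
  thus ?thesis by (simp add: of_nat_eq_0_iff_char_dvd)
qed

lemma CHAR_eq_if_card_prime_power:
  assumes "prime p" and "card (UNIV :: 'a::{field,finite} set) = p ^ n"
  shows "CHAR('a) = p"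
proof -
  have "prime CHAR('a)"
    by (rule prime_CHAR_semidom) (simp add: finite_imp_CHAR_pos)
  moreover have "CHAR('a) dvd p ^ n"
    using CHAR_dvd_card[where 'a='a] assms(2) by simp
  ultimately show ?thesis
    using assms(1) prime_dvd_power primes_dvd_imp_eq by blast
qed

lemma field_hom_power_prime_power_card:
  assumes "prime p" and "q = p ^ e" and "card (UNIV :: 'a::{field,finite} set) = q ^ h"
  shows "field_hom (\<lambda>x::'a. x ^ (q ^ l))"
proof -
  have "CHAR('a) = p"
    by (rule CHAR_eq_if_card_prime_power[OF \<open>prime p\<close>, of "e * h"])
      (simp add: assms(2,3) power_mult)
  thus ?thesis
    by (intro field_hom_power_CHAR[where n = "e * l"]) (simp_all add: assms(1,2) power_mult)
qed

lemma Fq_power_fixed: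
  assumes "\<alpha> \<in> Fq q"
  shows "\<alpha> ^ (q ^ l) = \<alpha>"
proof (induction l)
  case (Suc l)
  have "\<alpha> ^ (q ^ Suc l) = (\<alpha> ^ q) ^ (q ^ l)"
    by (simp add: mult.commute power_mult)
  with Suc assms show ?case by (simp add: Fq_def)
qed simp

lemma mem_Fq_adj: "a \<in> Fq_adj q a"
  unfolding Fq_adj_def by blast

lemma Fq_adj_least: "is_subfield K \<Longrightarrow> Fq q \<subseteq> K \<Longrightarrow> a \<in> K \<Longrightarrow> Fq_adj q a \<subseteq> K"
  unfolding Fq_adj_def by blast

lemma linearised_eq_0_imp_coeff_eq_0:
  fixes d :: "nat \<Rightarrow> 'a::{field,finite}"
  assumes "q \<ge> 2" and card: "card (UNIV :: 'a set) = q ^ h"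
    and vanish: "\<And>y. (\<Sum>l<h. d l * y ^ (q ^ l)) = 0" and "k < h"
  shows "d k = 0"
proof -
  define P where "P = (\<Sum>l<h. monom (d l) (q ^ l))"
  have "degree P \<le> q ^ (h - 1)"
    unfolding P_def
  proof (rule degree_sum_le)
    fix l assume "l \<in> {..<h}"
    hence "q ^ l \<le> q ^ (h - 1)" using \<open>q \<ge> 2\<close> by (intro power_increasing) auto
    thus "degree (monom (d l) (q ^ l)) \<le> q ^ (h - 1)" using degree_monom_le order_trans by blast
  qed simp
  also have "\<dots> < card {x. poly P x = 0}"
    using vanish \<open>q \<ge> 2\<close> \<open>k < h\<close> by (simp add: card P_def poly_sum poly_monom)
  finally have "P = 0"
    using card_poly_roots_bound leD by blast
  hence "0 = coeff P (q ^ k)" by simp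
  also have "\<dots> = (\<Sum>l<h. if l = k then d l else 0)"
    unfolding P_def coeff_sum coeff_monom
    by (intro sum.cong refl) (use \<open>q \<ge> 2\<close> in simp)
  also have "\<dots> = d k" using \<open>k < h\<close> by simp
  finally show ?thesis by simp
qed

lemma linearised_coeff_nonzero:
  fixes f :: "'a::comm_semiring_1 \<Rightarrow> 'a"
  assumes "\<And>x. f x = (\<Sum>l<h. c l * x ^ (q ^ l))" and "inj f"
  shows "\<exists>l<h. c l \<noteq> 0"
proof (rule ccontr)
  assume "\<not> (\<exists>l<h. c l \<noteq> 0)"
  hence "f 0 = f 1" by (simp add: assms(1))
  thus False using assms(2) by (simp add: inj_eq)
qed

lemma linearised_mult_eq_imp_power_eq:
  fixes c :: "nat \<Rightarrow> 'a::{field,finite}"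
  assumes "q \<ge> 2" and "card (UNIV :: 'a set) = q ^ h"
    and f: "\<And>x. f x = (\<Sum>l<h. c l * x ^ (q ^ l))"
    and scale: "\<And>y. f (a * y) = b * f y"
    and "l < h" and "c l \<noteq> 0"
  shows "a ^ (q ^ l) = b"
proof -
  have "(\<Sum>l<h. (c l * a ^ (q ^ l) - b * c l) * y ^ (q ^ l)) = f (a * y) - b * f y" for y
    by (simp add: f sum_distrib_left sum_subtractf algebra_simps)
  hence "c l * a ^ (q ^ l) - b * c l = 0"
    using linearised_eq_0_imp_coeff_eq_0[OF assms(1,2) _ \<open>l < h\<close>,
        of "\<lambda>l. c l * a ^ (q ^ l) - b * c l"]
    by (simp add: scale)
  thus ?thesis using \<open>c l \<noteq> 0\<close> by (simp add: algebra_simps)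
qed

lemma linearised_mult_eq:
  fixes f :: "'a::comm_semiring_1 \<Rightarrow> 'a"
  assumes f: "\<And>x. f x = (\<Sum>l<h. c l * x ^ (q ^ l))"
    and "\<And>l. l < h \<Longrightarrow> c l \<noteq> 0 \<Longrightarrow> \<alpha> ^ (q ^ l) = \<beta>"
  shows "f (\<alpha> * x) = \<beta> * f x"
proof -
  have "f (\<alpha> * x) = (\<Sum>l<h. \<beta> * (c l * x ^ (q ^ l)))"
    unfolding f
  proof (intro sum.cong refl)
    fix l assume "l \<in> {..<h}"
    thus "c l * (\<alpha> * x) ^ (q ^ l) = \<beta> * (c l * x ^ (q ^ l))"
      using assms(2)[of l] by (cases "c l = 0") (simp_all add: power_mult_distrib mult_ac)
  qed
  thus ?thesis by (simp add: f sum_distrib_left)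
qed

lemma semilinear_Fq_adj_if_support_powers_eq:
  fixes f :: "'a::{field,finite} \<Rightarrow> 'a"
  assumes frobenius: "\<And>l. field_hom (\<lambda>x::'a. x ^ (q ^ l))"
    and f: "\<And>x. f x = (\<Sum>l<h. c l * x ^ (q ^ l))"
    and a_powers: "\<And>l. l < h \<Longrightarrow> c l \<noteq> 0 \<Longrightarrow> a ^ (q ^ l) = a ^ (q ^ l\<^sub>0)"
  shows "semilinear (Fq_adj q a) f"
proof -
  define \<sigma> where "\<sigma> = (\<lambda>x::'a. x ^ (q ^ l\<^sub>0))"
  define T where "T = {\<alpha>. \<forall>l\<in>{l. l < h \<and> c l \<noteq> 0}. \<alpha> ^ (q ^ l) = \<sigma> \<alpha>}"
  have "is_subfield T"
    unfolding T_def \<sigma>_def by (intro is_subfield_equalizer frobenius)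
  moreover have "Fq q \<subseteq> T"
    by (auto simp: T_def \<sigma>_def Fq_power_fixed[of _ q])
  moreover have "a \<in> T"
    using a_powers by (simp add: T_def \<sigma>_def)
  ultimately have "Fq_adj q a \<subseteq> T" by (rule Fq_adj_least)
  hence "\<forall>\<alpha>\<in>Fq_adj q a. \<forall>x. f (\<alpha> * x) = \<sigma> \<alpha> * f x"
    by (auto simp: T_def intro: linearised_mult_eq[OF f])
  moreover have "field_aut \<sigma>"
    unfolding \<sigma>_def by (rule field_aut_if_field_hom[OF frobenius])
  ultimately show ?thesis
    unfolding semilinear_def by blast
qed

lemma semilinear_imp_conj_mult_eq:
  assumes "semilinear K f" and "a \<in> K" and "surj f"
  shows "\<exists>b. \<forall>x. f (a * inv f x) = b * x"
proof -
  obtain \<sigma> where "\<forall>\<alpha>\<in>K. \<forall>x. f (\<alpha> * x) = \<sigma> \<alpha> * f x"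
    using assms(1) unfolding semilinear_def by blast
  hence "f (a * inv f x) = \<sigma> a * x" for x
    using assms(2,3) by (simp add: surj_f_inv_f)
  thus ?thesis by blast
qed

theorem lemma5p6:
  fixes f :: "'a::{field,finite} \<Rightarrow> 'a" and a :: 'a and q h :: nat
  assumes "\<exists>p e. prime p \<and> e > 0 \<and> q = p ^ e"
    and "h > 0"
    and "card (UNIV :: 'a set) = q ^ h"
    and "linearised q h f"
    and "bij f"
  shows "(\<exists>b. \<forall>x. f (a * inv f x) = b * x) \<longleftrightarrow> semilinear (Fq_adj q a) f"
proof
  assume "\<exists>b. \<forall>x. f (a * inv f x) = b * x"
  then obtain b where "\<forall>x. f (a * inv f x) = b * x" by blast
  hence scale: "f (a * y) = b * f y" for y
    using assms(5) by (metis bij_is_inj inv_f_f)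
  obtain c where f: "\<And>x. f x = (\<Sum>l<h. c l * x ^ (q ^ l))"
    using assms(4) unfolding linearised_def by blast
  obtain p e where "prime p" "e > 0" and q: "q = p ^ e"
    using assms(1) by blast
  hence "q \<ge> 2"
    using prime_ge_2_nat[OF \<open>prime p\<close>] self_le_power[of p e] by linarith
  obtain l\<^sub>0 where "l\<^sub>0 < h" "c l\<^sub>0 \<noteq> 0"
    using linearised_coeff_nonzero[OF f bij_is_inj[OF assms(5)]] by blast
  have a_powers: "a ^ (q ^ l) = b" if "l < h" "c l \<noteq> 0" for l
    using linearised_mult_eq_imp_power_eq[OF \<open>q \<ge> 2\<close> assms(3) f, of a b] scale that by blast
  show "semilinear (Fq_adj q a) f"
  proof (rule semilinear_Fq_adj_if_support_powers_eq[OF _ f])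
    show "field_hom (\<lambda>x::'a. x ^ (q ^ l))" for l
      by (rule field_hom_power_prime_power_card[OF \<open>prime p\<close> q assms(3)])
    show "a ^ (q ^ l) = a ^ (q ^ l\<^sub>0)" if "l < h" "c l \<noteq> 0" for l
      using a_powers that \<open>l\<^sub>0 < h\<close> \<open>c l\<^sub>0 \<noteq> 0\<close> by simp
  qed
next
  assume "semilinear (Fq_adj q a) f"
  thus "\<exists>b. \<forall>x. f (a * inv f x) = b * x"
    by (rule semilinear_imp_conj_mult_eq[OF _ mem_Fq_adj bij_is_surj[OF assms(5)]])
qed

end
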